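(* Let $Q\subset\mathbb{R}^d$, let $L(q,\dot q,S)$ be a smooth Lagrangian on $Q\times\mathbb{R}^d\times\mathbb{R}$ and $F^{fr}(q,\dot q,S)\in\mathbb{R}^d$ a smooth friction force. Assume the Legendre transform $(q,\dot q)\mapsto (q,p)$, $p=\frac{\partial L}{\partial \dot q}$, is a diffeomorphism, and define $H(q,p,S)=\langle p,\dot q\rangle - L(q,\dot q,S)$ (with $\dot q$ expressed in terms of $(q,p,S)$). Let $T=\frac{\partial H}{\partial S}$ and $K=-\langle F^{fr},\frac{\partial H}{\partial p}\rangle$, where $F^{fr}$ is evaluated at $(q,\frac{\partial H}{\partial p},S)$, and assume $T\neq 0$ and $K\neq 0$ along the motion. Define, for smooth functions $F,G,M,N$ of $(q,p,S)$, $$\{F,G\}=\Big\langle \frac{\partial F}{\partial q},\frac{\partial G}{\partial p}\Big\rangle-\Big\langle \frac{\partial F}{\partial p},\frac{\partial G}{\partial q}\Big\rangle,$$ $$(F,G;M,N)=\frac{1}{TK}\Big(\langle F^{fr},\tfrac{\partial F}{\partial p}\rangle\tfrac{\partial G}{\partial S}-\langle F^{fr},\tfrac{\partial G}{\partial p}\rangle\tfrac{\partial F}{\partial S}\Big)\Big(\langle F^{fr},\tfrac{\partial M}{\partial p}\rangle\tfrac{\partial N}{\partial S}-\langle F^{fr},\tfrac{\partial N}{\partial p}\rangle\tfrac{\partial M}{\partial S}\Big).$$ Then a curve $(q(t),S(t))\in Q\times\mathbb{R}$ is a solution of the variational problem for simple thermodynamic systems (see context) if and only if, after the change of variables $(q,\dot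 q,S)\mapsto(q,p,S)$, it is a metriplectic system with Poisson bracket $\{\cdot,\cdot\}$, 4-bracket $(\cdot,\cdot;\cdot,\cdot)$, Hamiltonian $H$ and entropy function $S$ (the coordinate function $(q,p,S)\mapsto S$), i.e. for every smooth function $F(q,p,S)$ one has $\frac{d}{dt}F(q(t),p(t),S(t))=\{F,H\}+(F,H;S,H)$ along the curve.
   Context: $\langle\cdot,\cdot\rangle$ is the standard dot product on $\mathbb{R}^d$. Variational problem for simple thermodynamic systems: find a curve $(q(t),S(t))\in Q\times\mathbb{R}$, $t\in[0,T_f]$, such that $\delta\int_0^{T_f}L(q,\dot q,S)\,dt=0$ for all variations $(\delta q,\delta S)$ with $\delta q$ vanishing at $t=0,T_f$ and subject to the variational constraint $\frac{\partial L}{\partial S}\delta S=\langle F^{fr}(q,\dot q,S),\delta q\rangle$, and such that the curve satisfies the phenomenological constraint $\frac{\partial L}{\partial S}\dot S=\langle F^{fr}(q,\dot q,S),\dot q\rangle$. (Solutions are exactly the curves satisfying $\frac{d}{dt}\frac{\partial L}{\partial\dot q}-\frac{\partial L}{\partial q}=F^{fr}$ and $\frac{\partial L}{\partial S}\dot S=\langle F^{fr},\dot q\rangle$.) Metriplectic system: given an antisymmetric bilinear bracket $\{\cdot,\cdot\}$ satisfying the Jacobi identity, a 4-bracket with $(F,G;M,N)=-(G,F;M,N)=-(F,G;N,M)=(M,N;F,G)$, a Hamiltonian $H$ and an entropy $S$ with $\{F,S\}=0$ for all $F$, the dynamics is metriplectic if $\dot F=\{F,H\}+(F,H;S,H)$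 for every function $F$ of the state. *)

theory Defs
  imports "HOL-Analysis.Analysis"
begin

coinductive smooth_on :: "'a::euclidean_space set \<Rightarrow> ('a \<Rightarrow> 'b::real_normed_vector) \<Rightarrow> bool"
  for U where
  "(\<forall>x\<in>U. f differentiable (at x within U)) \<Longrightarrow>
   (\<forall>i\<in>Basis. smooth_on U (\<lambda>x. frechet_derivative f (at x within U) i)) \<Longrightarrow>
   smooth_on U f"

type_synonym 'n state = "(real^'n) \<times> (real^'n) \<times> real"

text \<open>Partial gradients of a scalar function of (q, v, S) (resp. (q, p, S)).\<close>
definition grad1 :: "('n::finite state \<Rightarrow> real) \<Rightarrow> 'n state \<Rightarrow> real^'n" where
  "grad1 f z = (\<chi> i. frechet_derivative f (at z) (axis i 1, 0, 0))"

definition grad2 :: "('n::finite state \<Rightarrow> real) \<Rightarrow> 'n state \<Rightarrow> real^'n" where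
  "grad2 f z = (\<chi> i. frechet_derivative f (at z) (0, axis i 1, 0))"

definition dS :: "('n::finite state \<Rightarrow> real) \<Rightarrow> 'n state \<Rightarrow> real" where
  "dS f z = frechet_derivative f (at z) (0, 0, 1)"

definition Sfun :: "'n::finite state \<Rightarrow> real" where
  "Sfun z = snd (snd z)"

text \<open>Hamiltonian H(q,p,S) = <p, qdot> - L(q,qdot,S) with qdot = V(q,p,S) the inverse Legendre map.\<close>
definition Ham :: "('n::finite state \<Rightarrow> real) \<Rightarrow> ('n state \<Rightarrow> real^'n) \<Rightarrow> 'n state \<Rightarrow> real" where
  "Ham L V z = (case z of (q, p, S) \<Rightarrow> inner p (V z) - L (q, V z, S))"

definition Temp :: "('n::finite state \<Rightarrow> real) \<Rightarrow> ('n state \<Rightarrow> real^'n) \<Rightarrow> 'n state \<Rightarrow> real" where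
  "Temp L V z = dS (Ham L V) z"

definition Ffr_H :: "('n::finite state \<Rightarrow> real) \<Rightarrow> ('n state \<Rightarrow> real^'n) \<Rightarrow> ('n state \<Rightarrow> real^'n)
    \<Rightarrow> 'n state \<Rightarrow> real^'n" where
  "Ffr_H L V Ffr z = (case z of (q, p, S) \<Rightarrow> Ffr (q, grad2 (Ham L V) z, S))"

definition Kfun :: "('n::finite state \<Rightarrow> real) \<Rightarrow> ('n state \<Rightarrow> real^'n) \<Rightarrow> ('n state \<Rightarrow> real^'n)
    \<Rightarrow> 'n state \<Rightarrow> real" where
  "Kfun L V Ffr z = - inner (Ffr_H L V Ffr z) (grad2 (Ham L V) z)"

definition poisson :: "('n::finite state \<Rightarrow> real) \<Rightarrow> ('n state \<Rightarrow> real) \<Rightarrow> 'n state \<Rightarrow> real" where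
  "poisson F G z = inner (grad1 F z) (grad2 G z) - inner (grad2 F z) (grad1 G z)"

definition fourbr :: "('n::finite state \<Rightarrow> real) \<Rightarrow> ('n state \<Rightarrow> real^'n) \<Rightarrow> ('n state \<Rightarrow> real^'n)
    \<Rightarrow> ('n state \<Rightarrow> real) \<Rightarrow> ('n state \<Rightarrow> real) \<Rightarrow> ('n state \<Rightarrow> real) \<Rightarrow> ('n state \<Rightarrow> real)
    \<Rightarrow> 'n state \<Rightarrow> real" where
  "fourbr L V Ffr F G M N z =
     (let Fr = Ffr_H L V Ffr z in
      1 / (Temp L V z * Kfun L V Ffr z)
      * (inner Fr (grad2 F z) * dS G z - inner Fr (grad2 G z) * dS F z)
      * (inner Fr (grad2 M z) * dS N z - inner Fr (grad2 N z) * dS M z))"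

text \<open>Solution of the variational problem for simple thermodynamic systems on [0,Tf].
  The first variation is the derivative at eps = 0 of the action along the varied curve.\<close>
definition var_solution :: "('n::finite state \<Rightarrow> real) \<Rightarrow> ('n state \<Rightarrow> real^'n) \<Rightarrow> real
    \<Rightarrow> (real \<Rightarrow> real^'n) \<Rightarrow> (real \<Rightarrow> real) \<Rightarrow> bool" where
  "var_solution L Ffr Tf q S \<longleftrightarrow>
     (let qd = (\<lambda>t. vector_derivative q (at t within {0..Tf}));
          Sd = (\<lambda>t. vector_derivative S (at t within {0..Tf}))
      in (\<forall>\<delta>q \<delta>S. smooth_on {0..Tf} \<delta>q \<and> smooth_on {0..Tf} \<delta>S \<and> \<delta>q 0 = 0 \<and> \<delta>q Tf = 0 \<and>
            (\<forall>t\<in>{0..Tf}. dS L (q t, qd t, S t) * \<delta>S t = inner (Ffr (q t, qd t, S t)) (\<delta>q t))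
          \<longrightarrow> ((\<lambda>\<epsilon>. integral {0..Tf} (\<lambda>t. L (q t + \<epsilon> *\<^sub>R \<delta>q t,
                    qd t + \<epsilon> *\<^sub>R vector_derivative \<delta>q (at t within {0..Tf}),
                    S t + \<epsilon> * \<delta>S t))) has_real_derivative 0) (at 0))
       \<and> (\<forall>t\<in>{0..Tf}. dS L (q t, qd t, S t) * Sd t = inner (Ffr (q t, qd t, S t)) (qd t)))"

definition metriplectic :: "'n::finite state set \<Rightarrow> ('n state \<Rightarrow> real) \<Rightarrow> ('n state \<Rightarrow> real^'n)
    \<Rightarrow> ('n state \<Rightarrow> real^'n) \<Rightarrow> real \<Rightarrow> (real \<Rightarrow> real^'n) \<Rightarrow> (real \<Rightarrow> real^'n) \<Rightarrow> (real \<Rightarrow> real) \<Rightarrow> bool" where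
  "metriplectic D L V Ffr Tf q p S \<longleftrightarrow>
     (\<forall>F. smooth_on D F \<longrightarrow>
        (\<forall>t\<in>{0..Tf}. ((\<lambda>t. F (q t, p t, S t)) has_real_derivative
            (poisson F (Ham L V) (q t, p t, S t)
             + fourbr L V Ffr F (Ham L V) Sfun (Ham L V) (q t, p t, S t))) (at t within {0..Tf})))"

end

(*
  Both sides of the equivalence are reformulations of the same equations of motion

    d/dt p = dL/dq + F,    dL/dS * dS/dt = <F, dq/dt>,    where p = dL/d(dq/dt).

  Variational side: the variational constraint eliminates delta S, and after an integration by
  parts the first variation of the action along an admissible variation is the integral of
  <dL/dq + F - dp/dt, delta q>.  It vanishes when the momentum equation holds; conversely,
  testing with delta q = t (T_f - t) (dL/dq + F - dp/dt) forces the residual to vanish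
  (fundamental lemma of the calculus of variations).

  Metriplectic side: the Legendre transform gives dH/dq = -dL/dq, dH/dp = dq/dt and
  dH/dS = -dL/dS, hence T = -dL/dS and K = -<F, dq/dt>; the factor 1/(T K) of the 4-bracket
  cancels and

    {G, H} + (G, H; S, H) = <dG/dq, dq/dt> + <dG/dp, dL/dq + F> + dG/dS <F, dq/dt> / (dL/dS).

  Once the equations of motion hold, this is the chain rule for G(q, p, S) along the curve;
  conversely the observables G = p_i and G = S recover the equations of motion.
*)

theory Submission
  imports Defs
begin

section \<open>Derivatives within sets\<close>

text \<open>The hypothesis of \<open>frechet_derivative_unique_within\<close>: derivatives within such a set
  are unique.\<close>

definition basis_approachable :: "'a::euclidean_space set \<Rightarrow> bool" where
  "basis_approachable U \<longleftrightarrow>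
     (\<forall>x\<in>U. \<forall>i\<in>Basis. \<forall>e>0. \<exists>d. 0 < \<bar>d\<bar> \<and> \<bar>d\<bar> < e \<and> x + d *\<^sub>R i \<in> U)"

lemma basis_approachable_open: "open U \<Longrightarrow> basis_approachable U"
  unfolding basis_approachable_def
proof (intro ballI allI impI)
  fix x i and e :: real assume "open U" "x \<in> U" "i \<in> (Basis::'a set)" "e > 0"
  then obtain r where r: "r > 0" "ball x r \<subseteq> U" by (meson openE)
  define d where "d = min e r / 2"
  have "0 < \<bar>d\<bar>" "\<bar>d\<bar> < e" using r \<open>e > 0\<close> by (auto simp: d_def)
  moreover have "x + d *\<^sub>R i \<in> ball x r" using r \<open>e > 0\<close> \<open>i \<in> Basis\<close>
    by (auto simp: d_def dist_norm)
  ultimately show "\<exists>d. 0 < \<bar>d\<bar> \<and> \<bar>d\<bar> < e \<and> x + d *\<^sub>R i \<in> U" using r by blast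
qed

lemma basis_approachable_atLeastAtMost: "(a::real) < b \<Longrightarrow> basis_approachable {a..b}"
  unfolding basis_approachable_def
proof (intro ballI allI impI)
  fix x i and e :: real assume ab: "a < b" "x \<in> {a..b}" "i \<in> (Basis::real set)" "e > 0"
  then have "i = 1" by auto
  define d where "d = (if x = b then - min (b - a) e / 2 else min (b - x) e / 2)"
  have "0 < \<bar>d\<bar> \<and> \<bar>d\<bar> < e \<and> x + d *\<^sub>R i \<in> {a..b}"
    using ab \<open>i = 1\<close> by (auto simp: d_def min_def field_simps)
  then show "\<exists>d. 0 < \<bar>d\<bar> \<and> \<bar>d\<bar> < e \<and> x + d *\<^sub>R i \<in> {a..b}" by blast
qed

lemma frechet_derivative_within_eqI:
  assumes "basis_approachable U" "x \<in> U" "(f has_derivative f') (at x within U)"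
  shows "frechet_derivative f (at x within U) = f'"
proof -
  have "(f has_derivative frechet_derivative f (at x within U)) (at x within U)"
    using assms(3) frechet_derivative_works by (auto simp: differentiable_def)
  then show ?thesis
    using assms unfolding basis_approachable_def by (intro frechet_derivative_unique_within) auto
qed

lemma frechet_derivative_within_cong:
  assumes "x \<in> U" "\<And>y. y \<in> U \<Longrightarrow> f y = g y"
  shows "frechet_derivative f (at x within U) = frechet_derivative g (at x within U)"
proof -
  have "(f has_derivative f') (at x within U) \<longleftrightarrow> (g has_derivative f') (at x within U)" for f'
    using assms by (metis has_derivative_transform)
  then show ?thesis unfolding frechet_derivative_def by simp
qed

section \<open>Smooth functions\<close>

text \<open>Finite-order approximations of the coinductive \<open>smooth_on\<close>, so that closure properties
  can be proved by induction on the order. Order \<open>0\<close> is plain differentiability.\<close>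

fun higher_differentiable_on ::
    "nat \<Rightarrow> 'a::euclidean_space set \<Rightarrow> ('a \<Rightarrow> 'b::real_normed_vector) \<Rightarrow> bool" where
  "higher_differentiable_on 0 U f \<longleftrightarrow> (\<forall>x\<in>U. f differentiable (at x within U))"
| "higher_differentiable_on (Suc k) U f \<longleftrightarrow> (\<forall>x\<in>U. f differentiable (at x within U)) \<and>
     (\<forall>i\<in>Basis. higher_differentiable_on k U (\<lambda>x. frechet_derivative f (at x within U) i))"

lemma smooth_on_imp_higher_differentiable_on:
  "smooth_on U f \<Longrightarrow> higher_differentiable_on k U f"
  by (induction k arbitrary: f) (auto elim: smooth_on.cases)

lemma smooth_on_iff_higher_differentiable_on:
  "smooth_on U f \<longleftrightarrow> (\<forall>k. higher_differentiable_on k U f)"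
proof
  assume "\<forall>k. higher_differentiable_on k U f"
  then show "smooth_on U f"
  proof (coinduction arbitrary: f rule: smooth_on.coinduct)
    case (smooth_on f)
    then have "\<forall>x\<in>U. f differentiable (at x within U)"
      by (metis higher_differentiable_on.simps(1))
    moreover have "\<forall>i\<in>Basis. \<forall>k. higher_differentiable_on k U
        (\<lambda>x. frechet_derivative f (at x within U) i)"
      using smooth_on by (metis higher_differentiable_on.simps(2))
    ultimately show ?case by blast
  qed
qed (use smooth_on_imp_higher_differentiable_on in blast)

lemma higher_differentiable_on_differentiable:
  "higher_differentiable_on k U f \<Longrightarrow> x \<in> U \<Longrightarrow> f differentiable (at x within U)"
  by (cases k) auto

lemma higher_differentiable_on_has_derivative:
  "higher_differentiable_on k U f \<Longrightarrow> x \<in> U \<Longrightarrow>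
    (f has_derivative frechet_derivative f (at x within U)) (at x within U)"
  using higher_differentiable_on_differentiable frechet_derivative_works by blast

lemma higher_differentiable_on_SucD:
  "higher_differentiable_on (Suc k) U f \<Longrightarrow> higher_differentiable_on k U f"
  by (induction k arbitrary: f) auto

lemma higher_differentiable_on_cong:
  "higher_differentiable_on k U f \<Longrightarrow> (\<And>x. x \<in> U \<Longrightarrow> f x = g x) \<Longrightarrow>
    higher_differentiable_on k U g"
proof (induction k arbitrary: f g)
  case 0
  then show ?case
    unfolding higher_differentiable_on.simps differentiable_def by (metis has_derivative_transform)
next
  case (Suc k)
  have "\<forall>x\<in>U. g differentiable (at x within U)"
    using Suc.prems unfolding higher_differentiable_on.simps differentiable_def
    by (metis has_derivative_transform)
  moreover have "higher_differentiable_on k U (\<lambda>x. frechet_derivative g (at x within U) i)"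
    if "i \<in> Basis" for i
    using Suc.IH[of "\<lambda>x. frechet_derivative f (at x within U) i"] Suc.prems that
      frechet_derivative_within_cong[of _ U f g] by simp
  ultimately show ?case by simp
qed

lemma higher_differentiable_on_0I:
  "(\<And>x. x \<in> U \<Longrightarrow> (h has_derivative h' x) (at x within U)) \<Longrightarrow> higher_differentiable_on 0 U h"
  by (auto simp: differentiable_def)

lemma higher_differentiable_on_SucI:
  assumes "basis_approachable U"
    and "\<And>x. x \<in> U \<Longrightarrow> (h has_derivative h' x) (at x within U)"
    and "\<And>i. i \<in> Basis \<Longrightarrow> higher_differentiable_on k U (\<lambda>x. h' x i)"
  shows "higher_differentiable_on (Suc k) U h"
proof (simp only: higher_differentiable_on.simps, intro conjI ballI)
  fix x assume "x \<in> U" then show "h differentiable (at x within U)"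
    using assms(2) by (auto simp: differentiable_def)
next
  fix i :: 'a assume "i \<in> Basis"
  then show "higher_differentiable_on k U (\<lambda>x. frechet_derivative h (at x within U) i)"
    by (rule assms(3)[THEN higher_differentiable_on_cong])
      (simp add: frechet_derivative_within_eqI[OF assms(1) _ assms(2)])
qed

lemma higher_differentiable_on_const:
  "basis_approachable U \<Longrightarrow> higher_differentiable_on k U (\<lambda>x. c)"
proof (induction k arbitrary: c)
  case 0 then show ?case by (auto intro: higher_differentiable_on_0I)
next
  case (Suc k)
  then show ?case by (intro higher_differentiable_on_SucI[where h'="\<lambda>x h. 0"]) auto
qed

lemma higher_differentiable_on_linear:
  assumes "basis_approachable U" "bounded_linear l"
  shows "higher_differentiable_on k U f \<Longrightarrow> higher_differentiable_on k U (\<lambda>x. l (f x))"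
proof (induction k arbitrary: f)
  case 0 then show ?case
    by (intro higher_differentiable_on_0I[where h'="\<lambda>x h. l (frechet_derivative f (at x within U) h)"]
        bounded_linear.has_derivative[OF assms(2)] higher_differentiable_on_has_derivative)
next
  case (Suc k)
  show ?case
  proof (rule higher_differentiable_on_SucI[OF assms(1)])
    fix x assume "x \<in> U"
    then show "((\<lambda>x. l (f x)) has_derivative (\<lambda>h. l (frechet_derivative f (at x within U) h)))
        (at x within U)"
      using Suc.prems by (intro bounded_linear.has_derivative[OF assms(2)]
          higher_differentiable_on_has_derivative)
  qed (use Suc in auto)
qed

lemma higher_differentiable_on_id:
  "basis_approachable U \<Longrightarrow> higher_differentiable_on k U (\<lambda>x. x)"
proof (induction k)
  case 0 then show ?case by (auto intro!: higher_differentiable_on_0I derivative_eq_intros)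
next
  case (Suc k)
  then show ?case
    by (intro higher_differentiable_on_SucI[where h'="\<lambda>x h. h"])
      (auto intro!: derivative_eq_intros higher_differentiable_on_const)
qed

lemma higher_differentiable_on_add:
  assumes "basis_approachable U"
  shows "higher_differentiable_on k U f \<Longrightarrow> higher_differentiable_on k U g \<Longrightarrow>
    higher_differentiable_on k U (\<lambda>x. f x + g x)"
proof (induction k arbitrary: f g)
  case 0 show ?case
    by (rule higher_differentiable_on_0I, rule has_derivative_add[OF
          higher_differentiable_on_has_derivative[OF 0(1)]
          higher_differentiable_on_has_derivative[OF 0(2)]])
next
  case (Suc k)
  show ?case
  proof (rule higher_differentiable_on_SucI[OF assms])
    fix x assume "x \<in> U"
    then show "((\<lambda>x. f x + g x) has_derivative (\<lambda>h. frechet_derivative f (at x within U) h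
        + frechet_derivative g (at x within U) h)) (at x within U)"
      using Suc.prems by (intro has_derivative_add higher_differentiable_on_has_derivative)
  qed (use Suc in auto)
qed

lemma higher_differentiable_on_sum:
  "basis_approachable U \<Longrightarrow> (\<And>j. j \<in> A \<Longrightarrow> higher_differentiable_on k U (f j)) \<Longrightarrow>
    higher_differentiable_on k U (\<lambda>x. \<Sum>j\<in>A. f j x)"
  by (induction A rule: infinite_finite_induct)
    (simp_all add: higher_differentiable_on_const higher_differentiable_on_add)

lemma higher_differentiable_on_bilinear:
  assumes "basis_approachable U" "bounded_bilinear bl"
  shows "higher_differentiable_on k U f \<Longrightarrow> higher_differentiable_on k U g \<Longrightarrow>
    higher_differentiable_on k U (\<lambda>x. bl (f x) (g x))"
proof (induction k arbitrary: f g)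
  case 0 show ?case
    by (rule higher_differentiable_on_0I, rule bounded_bilinear.FDERIV[OF assms(2)
          higher_differentiable_on_has_derivative[OF 0(1)]
          higher_differentiable_on_has_derivative[OF 0(2)]])
next
  case (Suc k)
  let ?Df = "\<lambda>x. frechet_derivative f (at x within U)"
  let ?Dg = "\<lambda>x. frechet_derivative g (at x within U)"
  show ?case
  proof (rule higher_differentiable_on_SucI[OF assms(1)])
    fix x assume "x \<in> U"
    then show "((\<lambda>x. bl (f x) (g x)) has_derivative (\<lambda>h. bl (f x) (?Dg x h) + bl (?Df x h) (g x)))
        (at x within U)"
      using Suc.prems by (intro bounded_bilinear.FDERIV[OF assms(2)]
          higher_differentiable_on_has_derivative)
  next
    fix i :: 'a assume "i \<in> Basis"
    have "higher_differentiable_on k U f" "higher_differentiable_on k U g"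
      using Suc.prems higher_differentiable_on_SucD by blast+
    with Suc \<open>i \<in> Basis\<close>
    show "higher_differentiable_on k U (\<lambda>x. bl (f x) (?Dg x i) + bl (?Df x i) (g x))"
      by (intro higher_differentiable_on_add assms(1)) simp_all
  qed
qed

lemma higher_differentiable_on_inverse:
  fixes a :: "'a::euclidean_space \<Rightarrow> real"
  assumes "basis_approachable U"
  shows "higher_differentiable_on k U a \<Longrightarrow> (\<And>x. x \<in> U \<Longrightarrow> a x \<noteq> 0) \<Longrightarrow>
    higher_differentiable_on k U (\<lambda>x. inverse (a x))"
proof (induction k arbitrary: a)
  case 0 show ?case
    by (rule higher_differentiable_on_0I, rule Deriv.has_derivative_inverse[OF _
          higher_differentiable_on_has_derivative[OF 0(1)]]) (use 0 in auto)
next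
  case (Suc k)
  let ?Da = "\<lambda>x. frechet_derivative a (at x within U)"
  show ?case
  proof (rule higher_differentiable_on_SucI[OF assms])
    fix x assume "x \<in> U"
    then show "((\<lambda>x. inverse (a x)) has_derivative
        (\<lambda>h. - (inverse (a x) * ?Da x h * inverse (a x)))) (at x within U)"
      using Suc.prems by (intro Deriv.has_derivative_inverse higher_differentiable_on_has_derivative)
  next
    fix i :: 'a assume "i \<in> Basis"
    have "higher_differentiable_on k U (\<lambda>x. inverse (a x))"
      using Suc higher_differentiable_on_SucD by blast
    with Suc.prems \<open>i \<in> Basis\<close>
    have "higher_differentiable_on k U (\<lambda>x. - 1 * (inverse (a x) * ?Da x i * inverse (a x)))"
      by (intro higher_differentiable_on_bilinear[OF assms bounded_bilinear_mult]
          higher_differentiable_on_const assms) auto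
    then show "higher_differentiable_on k U (\<lambda>x. - (inverse (a x) * ?Da x i * inverse (a x)))"
      by simp
  qed
qed

lemma linear_eq_sum_Basis:
  assumes "linear l"
  shows "l v = (\<Sum>j\<in>Basis. (v \<bullet> j) *\<^sub>R l j)"
proof -
  have "l v = l (\<Sum>j\<in>Basis. (v \<bullet> j) *\<^sub>R j)" by (simp add: euclidean_representation)
  also have "\<dots> = (\<Sum>j\<in>Basis. (v \<bullet> j) *\<^sub>R l j)"
    by (simp add: linear_sum[OF assms] linear_scale[OF assms])
  finally show ?thesis .
qed

lemma has_derivative_compose_within_open:
  assumes "open V" "(g has_derivative g') (at x within U)" "g x \<in> V"
    and "f differentiable (at (g x) within V)"
  shows "((\<lambda>x. f (g x)) has_derivative (\<lambda>h. frechet_derivative f (at (g x) within V) (g' h)))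
    (at x within U)"
proof -
  have "(f has_derivative frechet_derivative f (at (g x))) (at (g x))"
    using assms(4) at_within_open[OF assms(3,1)] by (simp add: frechet_derivative_works)
  with at_within_open[OF assms(3,1)] show ?thesis
    by (simp add: has_derivative_compose[OF assms(2)])
qed

lemma higher_differentiable_on_compose:
  fixes g :: "'a::euclidean_space \<Rightarrow> 'b::euclidean_space"
  assumes "open V" "basis_approachable U"
  shows "higher_differentiable_on k V f \<Longrightarrow> higher_differentiable_on k U g \<Longrightarrow>
    (\<And>x. x \<in> U \<Longrightarrow> g x \<in> V) \<Longrightarrow> higher_differentiable_on k U (\<lambda>x. f (g x))"
proof (induction k arbitrary: f)
  let ?Dg = "\<lambda>x. frechet_derivative g (at x within U)"
  have chain: "((\<lambda>x. f (g x)) has_derivative (\<lambda>h. frechet_derivative f (at (g x) within V) (?Dg x h)))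
      (at x within U)"
    if "higher_differentiable_on k' V f" "higher_differentiable_on k'' U g" "x \<in> U" "g x \<in> V"
    for f :: "'b \<Rightarrow> 'c" and k' k'' x
    using that by (intro has_derivative_compose_within_open assms(1)
        higher_differentiable_on_has_derivative higher_differentiable_on_differentiable)
  {
    case 0 show ?case
      by (rule higher_differentiable_on_0I, rule chain[OF 0(1,2)]) (use 0 in auto)
  next
    case (Suc k)
    let ?Df = "\<lambda>y. frechet_derivative f (at y within V)"
    \<comment> \<open>expanding \<open>D(f \<circ> g)\<close> in the basis exposes the partials \<open>?Df (g x) j\<close>, to which the
      induction hypothesis applies\<close>
    show ?case
    proof (rule higher_differentiable_on_SucI[OF assms(2)])
      fix x assume "x \<in> U"
      then have "((\<lambda>x. f (g x)) has_derivative (\<lambda>h. ?Df (g x) (?Dg x h))) (at x within U)"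
        using Suc.prems by (intro chain)
      moreover have "linear (?Df (g x))"
        using Suc.prems \<open>x \<in> U\<close> higher_differentiable_on_has_derivative has_derivative_linear
        by blast
      then have "(\<lambda>h. ?Df (g x) (?Dg x h)) = (\<lambda>h. \<Sum>j\<in>Basis. (?Dg x h \<bullet> j) *\<^sub>R ?Df (g x) j)"
        by (intro ext linear_eq_sum_Basis)
      ultimately show "((\<lambda>x. f (g x)) has_derivative
          (\<lambda>h. \<Sum>j\<in>Basis. (?Dg x h \<bullet> j) *\<^sub>R ?Df (g x) j)) (at x within U)"
        by simp
    next
      fix i :: 'a assume i: "i \<in> Basis"
      have g: "higher_differentiable_on k U g"
        using Suc.prems(2) higher_differentiable_on_SucD by blast
      show "higher_differentiable_on k U (\<lambda>x. \<Sum>j\<in>Basis. (?Dg x i \<bullet> j) *\<^sub>R ?Df (g x) j)"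
      proof (intro higher_differentiable_on_sum
          higher_differentiable_on_bilinear[OF assms(2) bounded_bilinear_scaleR] assms(2))
        fix j :: 'b assume "j \<in> Basis"
        with Suc.prems(1) show "higher_differentiable_on k U (\<lambda>x. ?Df (g x) j)"
          by (intro Suc.IH[OF _ g Suc.prems(3)]) simp
        show "higher_differentiable_on k U (\<lambda>x. ?Dg x i \<bullet> j)"
          using Suc.prems(2) i by (intro higher_differentiable_on_linear[OF assms(2)
                bounded_linear_inner_left]) simp
      qed
    qed
  }
qed

lemma higher_differentiable_on_Pair:
  assumes "basis_approachable U" "higher_differentiable_on k U f" "higher_differentiable_on k U g"
  shows "higher_differentiable_on k U (\<lambda>x. (f x, g x))"
proof -
  have "higher_differentiable_on k U (\<lambda>x. (f x, 0))"
    by (rule higher_differentiable_on_linear[OF assms(1) _ assms(2)])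
      (intro bounded_linear_Pair bounded_linear_ident bounded_linear_zero)
  moreover have "higher_differentiable_on k U (\<lambda>x. (0, g x))"
    by (rule higher_differentiable_on_linear[OF assms(1) _ assms(3)])
      (intro bounded_linear_Pair bounded_linear_ident bounded_linear_zero)
  ultimately have "higher_differentiable_on k U (\<lambda>x. (f x, 0) + (0, g x))"
    by (rule higher_differentiable_on_add[OF assms(1)])
  then show ?thesis by simp
qed

lemma smooth_on_imp_differentiable: "smooth_on U f \<Longrightarrow> x \<in> U \<Longrightarrow> f differentiable (at x within U)"
  by (erule smooth_on.cases) blast

lemma smooth_on_open_imp_differentiable:
  "open U \<Longrightarrow> smooth_on U f \<Longrightarrow> x \<in> U \<Longrightarrow> f differentiable (at x)"
  using smooth_on_imp_differentiable at_within_open by metis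

lemma smooth_on_partial_derivative:
  "smooth_on U f \<Longrightarrow> i \<in> Basis \<Longrightarrow> smooth_on U (\<lambda>x. frechet_derivative f (at x within U) i)"
  by (erule smooth_on.cases) blast

lemma smooth_on_imp_continuous_on: "smooth_on U f \<Longrightarrow> continuous_on U f"
  using continuous_on_eq_continuous_within differentiable_imp_continuous_within
    smooth_on_imp_differentiable by blast

lemma smooth_on_cong: "smooth_on U f \<Longrightarrow> (\<And>x. x \<in> U \<Longrightarrow> f x = g x) \<Longrightarrow> smooth_on U g"
  unfolding smooth_on_iff_higher_differentiable_on by (blast intro: higher_differentiable_on_cong)

lemma smooth_on_const: "basis_approachable U \<Longrightarrow> smooth_on U (\<lambda>x. c)"
  by (simp add: smooth_on_iff_higher_differentiable_on higher_differentiable_on_const)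

lemma smooth_on_bounded_linear:
  assumes "basis_approachable U" "bounded_linear l"
  shows "smooth_on U l"
proof -
  have "higher_differentiable_on k U (\<lambda>x. l x)" for k
    by (rule higher_differentiable_on_linear[OF assms higher_differentiable_on_id[OF assms(1)]])
  then show ?thesis by (simp add: smooth_on_iff_higher_differentiable_on)
qed

lemma smooth_on_add:
  "basis_approachable U \<Longrightarrow> smooth_on U f \<Longrightarrow> smooth_on U g \<Longrightarrow> smooth_on U (\<lambda>x. f x + g x)"
  by (simp add: smooth_on_iff_higher_differentiable_on higher_differentiable_on_add)

lemma smooth_on_diff:
  assumes "basis_approachable U" "smooth_on U f" "smooth_on U g"
  shows "smooth_on U (\<lambda>x. f x - g x)"
proof -
  have "higher_differentiable_on k U (\<lambda>x. f x + - g x)" for k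
    using assms unfolding smooth_on_iff_higher_differentiable_on
    by (intro higher_differentiable_on_add higher_differentiable_on_linear[where l=uminus]
        bounded_linear_minus[OF bounded_linear_ident]) simp_all
  then show ?thesis by (simp add: smooth_on_iff_higher_differentiable_on)
qed

lemma smooth_on_sum:
  "basis_approachable U \<Longrightarrow> (\<And>j. j \<in> A \<Longrightarrow> smooth_on U (f j)) \<Longrightarrow>
    smooth_on U (\<lambda>x. \<Sum>j\<in>A. f j x)"
  by (simp add: smooth_on_iff_higher_differentiable_on higher_differentiable_on_sum)

lemma smooth_on_bilinear:
  "basis_approachable U \<Longrightarrow> bounded_bilinear bl \<Longrightarrow> smooth_on U f \<Longrightarrow> smooth_on U g \<Longrightarrow>
    smooth_on U (\<lambda>x. bl (f x) (g x))"
  by (simp add: smooth_on_iff_higher_differentiable_on higher_differentiable_on_bilinear)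

lemmas smooth_on_scaleR = smooth_on_bilinear[OF _ bounded_bilinear_scaleR]
   and smooth_on_mult = smooth_on_bilinear[OF _ bounded_bilinear_mult]
   and smooth_on_inner = smooth_on_bilinear[OF _ bounded_bilinear_inner]

lemma smooth_on_inverse:
  fixes a :: "'a::euclidean_space \<Rightarrow> real"
  shows "basis_approachable U \<Longrightarrow> smooth_on U a \<Longrightarrow> (\<And>x. x \<in> U \<Longrightarrow> a x \<noteq> 0) \<Longrightarrow>
    smooth_on U (\<lambda>x. inverse (a x))"
  by (simp add: smooth_on_iff_higher_differentiable_on higher_differentiable_on_inverse)

lemma smooth_on_compose:
  fixes g :: "'a::euclidean_space \<Rightarrow> 'b::euclidean_space"
  shows "open V \<Longrightarrow> basis_approachable U \<Longrightarrow> smooth_on V f \<Longrightarrow> smooth_on U g \<Longrightarrow>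
    (\<And>x. x \<in> U \<Longrightarrow> g x \<in> V) \<Longrightarrow> smooth_on U (\<lambda>x. f (g x))"
  by (simp add: smooth_on_iff_higher_differentiable_on higher_differentiable_on_compose)

lemma smooth_on_Pair:
  "basis_approachable U \<Longrightarrow> smooth_on U f \<Longrightarrow> smooth_on U g \<Longrightarrow> smooth_on U (\<lambda>x. (f x, g x))"
  by (simp add: smooth_on_iff_higher_differentiable_on higher_differentiable_on_Pair)

lemma smooth_on_vec_lambda:
  fixes c :: "'i::finite \<Rightarrow> 'a::euclidean_space \<Rightarrow> real"
  shows "basis_approachable U \<Longrightarrow> (\<And>i. smooth_on U (c i)) \<Longrightarrow> smooth_on U (\<lambda>x. \<chi> i. c i x)"
proof -
  assume U: "basis_approachable U" and c: "\<And>i. smooth_on U (c i)"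
  have "smooth_on U (\<lambda>x. \<Sum>i\<in>UNIV. c i x *\<^sub>R axis i (1::real))"
    by (intro smooth_on_sum smooth_on_scaleR smooth_on_const U c)
  moreover have "(\<Sum>i\<in>UNIV. c i x *\<^sub>R axis i (1::real)) = (\<chi> i. c i x)" for x
    using basis_expansion[of "\<chi> i. c i x"] by (simp add: scalar_mult_eq_scaleR)
  ultimately show ?thesis by simp
qed

lemma smooth_on_has_vector_derivative:
  "smooth_on U h \<Longrightarrow> t \<in> U \<Longrightarrow>
    (h has_vector_derivative vector_derivative h (at t within U)) (at t within U)"
  using smooth_on_imp_differentiable vector_derivative_works by blast

lemma smooth_on_vector_derivative:
  fixes h :: "real \<Rightarrow> 'b::real_normed_vector"
  assumes "a < b" "smooth_on {a..b} h"
  shows "smooth_on {a..b} (\<lambda>t. vector_derivative h (at t within {a..b}))"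
proof -
  have "frechet_derivative h (at t within {a..b}) 1 = vector_derivative h (at t within {a..b})"
    if "t \<in> {a..b}" for t
    using frechet_derivative_within_eqI[OF basis_approachable_atLeastAtMost[OF assms(1)] that
        smooth_on_has_vector_derivative[OF assms(2) that, unfolded has_vector_derivative_def]]
    by simp
  moreover have "smooth_on {a..b} (\<lambda>t. frechet_derivative h (at t within {a..b}) 1)"
    using smooth_on_partial_derivative[OF assms(2)] by simp
  ultimately show ?thesis by (auto intro: smooth_on_cong)
qed

lemma vec_has_vector_derivativeI:
  fixes f :: "real \<Rightarrow> real^'n::finite"
  assumes "\<And>i. ((\<lambda>t. f t $ i) has_real_derivative f' $ i) (at t within T)"
  shows "(f has_vector_derivative f') (at t within T)"
  unfolding has_vector_derivative_def
proof (subst has_derivative_componentwise_within, intro ballI)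
  fix b :: "real^'n" assume "b \<in> Basis"
  then obtain i where b: "b = axis i 1" by (auto simp: Basis_vec_def)
  have "(\<lambda>x. f x \<bullet> b) = (\<lambda>t. f t $ i)" "(\<lambda>x. x *\<^sub>R f' \<bullet> b) = (\<lambda>h. f' $ i * h)"
    unfolding b by (auto simp: inner_axis fun_eq_iff)
  with assms[of i] show "((\<lambda>x. f x \<bullet> b) has_derivative (\<lambda>x. x *\<^sub>R f' \<bullet> b)) (at t within T)"
    by (simp add: has_field_derivative_def)
qed

lemma linear_state_eq:
  fixes l :: "'n::finite state \<Rightarrow> real"
  assumes "linear l"
  shows "l (a, b, c) = inner (\<chi> i. l (axis i 1, 0, 0)) a + inner (\<chi> i. l (0, axis i 1, 0)) b
    + l (0, 0, 1) * c"
proof -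
  have sum_axis: "(\<Sum>i\<in>UNIV. (x $ i) *\<^sub>R axis i 1) = x" for x :: "real^'n"
    using basis_expansion[of x] by (simp add: scalar_mult_eq_scaleR)
  have "(\<Sum>i\<in>UNIV. (a $ i) *\<^sub>R (axis i 1, 0::real^'n, 0::real)) = (a, 0, 0)"
    "(\<Sum>i\<in>UNIV. (b $ i) *\<^sub>R (0::real^'n, axis i 1, 0::real)) = (0, b, 0)"
    by (simp_all add: sum_prod sum_axis)
  then have decomp: "(a, b, c) = (\<Sum>i\<in>UNIV. (a $ i) *\<^sub>R (axis i 1, 0, 0))
      + (\<Sum>i\<in>UNIV. (b $ i) *\<^sub>R (0, axis i 1, 0)) + c *\<^sub>R (0, 0, 1)"
    by simp
  have "l (a, b, c) = (\<Sum>i\<in>UNIV. (a $ i) * l (axis i 1, 0, 0))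
      + (\<Sum>i\<in>UNIV. (b $ i) * l (0, axis i 1, 0)) + c * l (0, 0, 1)"
    by (subst decomp, simp only: linear_add[OF assms] linear_sum[OF assms] linear_scale[OF assms])
      simp
  then show ?thesis by (simp add: inner_vec_def mult.commute)
qed

lemma has_derivative_grads:
  fixes f :: "'n::finite state \<Rightarrow> real"
  assumes "f differentiable (at z)"
  shows "(f has_derivative (\<lambda>(a, b, c). inner (grad1 f z) a + inner (grad2 f z) b + dS f z * c)) (at z)"
proof -
  have deriv: "(f has_derivative frechet_derivative f (at z)) (at z)"
    using assms frechet_derivative_works by blast
  have "frechet_derivative f (at z) (a, b, c) =
      inner (grad1 f z) a + inner (grad2 f z) b + dS f z * c" for a b c
    unfolding grad1_def grad2_def dS_def by (rule linear_state_eq[OF has_derivative_linear[OF deriv]])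
  then have "frechet_derivative f (at z) =
      (\<lambda>(a, b, c). inner (grad1 f z) a + inner (grad2 f z) b + dS f z * c)"
    by (intro ext) (auto split: prod.splits)
  with deriv show ?thesis by simp
qed

lemma grads_of_has_derivative:
  fixes f :: "'n::finite state \<Rightarrow> real"
  assumes "(f has_derivative (\<lambda>(a, b, c). inner g1 a + inner g2 b + g3 * c)) (at z)"
  shows "grad1 f z = g1" "grad2 f z = g2" "dS f z = g3"
  using frechet_derivative_at[OF assms, symmetric]
  by (simp_all add: grad1_def grad2_def dS_def vec_eq_iff inner_axis)

lemma has_real_derivative_comp_state_curve:
  fixes F :: "'n::finite state \<Rightarrow> real" and \<gamma> :: "real \<Rightarrow> 'n state"
  assumes "F differentiable (at (\<gamma> t))" "(\<gamma> has_vector_derivative \<gamma>') (at t within T)"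
  shows "((\<lambda>t. F (\<gamma> t)) has_real_derivative inner (grad1 F (\<gamma> t)) (fst \<gamma>')
    + inner (grad2 F (\<gamma> t)) (fst (snd \<gamma>')) + dS F (\<gamma> t) * snd (snd \<gamma>')) (at t within T)"
  using has_derivative_compose[OF assms(2)[unfolded has_vector_derivative_def]
      has_derivative_grads[OF assms(1)]]
  unfolding has_field_derivative_def
  by (rule has_derivative_eq_rhs) (auto simp: fun_eq_iff algebra_simps split_beta)

lemma has_real_derivative_along_line:
  fixes F :: "'n::finite state \<Rightarrow> real"
  assumes "F differentiable (at (z + \<epsilon> *\<^sub>R w))"
  shows "((\<lambda>\<epsilon>. F (z + \<epsilon> *\<^sub>R w)) has_real_derivative inner (grad1 F (z + \<epsilon> *\<^sub>R w)) (fst w)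
    + inner (grad2 F (z + \<epsilon> *\<^sub>R w)) (fst (snd w)) + dS F (z + \<epsilon> *\<^sub>R w) * snd (snd w))
    (at \<epsilon> within U)"
proof -
  have "((\<lambda>\<epsilon>. z + \<epsilon> *\<^sub>R w) has_vector_derivative w) (at \<epsilon> within U)"
    unfolding has_vector_derivative_def by (auto intro!: derivative_eq_intros)
  with assms show ?thesis by (rule has_real_derivative_comp_state_curve)
qed

lemma state_axis_in_Basis:
  "((axis i 1, 0, 0) :: 'n::finite state) \<in> Basis"
  "((0, axis i 1, 0) :: 'n::finite state) \<in> Basis"
  "((0, 0, 1) :: 'n::finite state) \<in> Basis"
  by (auto simp: Basis_prod_def zero_prod_def)

lemma
  fixes f :: "'n::finite state \<Rightarrow> real"
  assumes "open D" "smooth_on D f"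
  shows smooth_on_grad1: "smooth_on D (grad1 f)"
    and smooth_on_grad2: "smooth_on D (grad2 f)"
    and smooth_on_dS: "smooth_on D (dS f)"
proof -
  have D: "basis_approachable D" using assms(1) by (rule basis_approachable_open)
  have partial: "frechet_derivative f (at z) = frechet_derivative f (at z within D)" if "z \<in> D" for z
    using at_within_open[OF that assms(1)] by simp
  have "smooth_on D (\<lambda>z. \<chi> i. frechet_derivative f (at z within D) (axis i 1, 0, 0))"
    using assms(2) state_axis_in_Basis
    by (intro smooth_on_vec_lambda D smooth_on_partial_derivative)
  then show "smooth_on D (grad1 f)"
    by (rule smooth_on_cong) (simp add: grad1_def partial)
  have "smooth_on D (\<lambda>z. \<chi> i. frechet_derivative f (at z within D) (0, axis i 1, 0))"
    using assms(2) state_axis_in_Basis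
    by (intro smooth_on_vec_lambda D smooth_on_partial_derivative)
  then show "smooth_on D (grad2 f)"
    by (rule smooth_on_cong) (simp add: grad2_def partial)
  have "smooth_on D (\<lambda>z. frechet_derivative f (at z within D) (0, 0, 1))"
    using assms(2) state_axis_in_Basis by (intro smooth_on_partial_derivative)
  then show "smooth_on D (dS f)"
    by (rule smooth_on_cong) (simp add: dS_def partial)
qed

section \<open>The Hamiltonian and the metriplectic brackets\<close>

lemma grads_Ham:
  fixes L :: "'n::finite state \<Rightarrow> real" and V :: "'n state \<Rightarrow> real^'n"
  assumes "V differentiable (at (x, p, s))"
    and "L differentiable (at (x, V (x, p, s), s))"
    and legendre: "grad2 L (x, V (x, p, s), s) = p"
  shows "grad1 (Ham L V) (x, p, s) = - grad1 L (x, V (x, p, s), s)"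
    and "grad2 (Ham L V) (x, p, s) = V (x, p, s)"
    and "dS (Ham L V) (x, p, s) = - dS L (x, V (x, p, s), s)"
proof -
  let ?z = "(x, p, s)"
  let ?w = "(x, V ?z, s)"
  let ?V' = "frechet_derivative V (at ?z)"
  have dV: "(V has_derivative ?V') (at ?z)" using assms(1) by (simp add: frechet_derivative_works)
  have "((\<lambda>z. (fst z, V z, snd (snd z))) has_derivative (\<lambda>h. (fst h, ?V' h, snd (snd h)))) (at ?z)"
    by (intro derivative_eq_intros) (auto intro: dV)
  from has_derivative_compose[OF this, of L, simplified, OF has_derivative_grads[OF assms(2)]]
  have dL: "((\<lambda>z. L (fst z, V z, snd (snd z))) has_derivative
      (\<lambda>h. inner (grad1 L ?w) (fst h) + inner p (?V' h) + dS L ?w * snd (snd h))) (at ?z)"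
    by (simp add: split_beta legendre)
  have dpV: "((\<lambda>z. inner (fst (snd z)) (V z)) has_derivative
      (\<lambda>h. inner p (?V' h) + inner (fst (snd h)) (V ?z))) (at ?z)"
    by (intro derivative_eq_intros) (auto intro: dV)
  have "Ham L V = (\<lambda>z. inner (fst (snd z)) (V z) - L (fst z, V z, snd (snd z)))"
    by (auto simp: Ham_def fun_eq_iff split: prod.splits)
  then have "(Ham L V has_derivative
      (\<lambda>(a, b, c). inner (- grad1 L ?w) a + inner (V ?z) b + (- dS L ?w) * c)) (at ?z)"
    by (simp only:) (rule has_derivative_eq_rhs[OF has_derivative_diff[OF dpV dL]],
        auto simp: fun_eq_iff inner_commute split: prod.splits)
  from grads_of_has_derivative[OF this]
  show "grad1 (Ham L V) ?z = - grad1 L ?w" "grad2 (Ham L V) ?z = V ?z"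
    "dS (Ham L V) ?z = - dS L ?w"
    by auto
qed

lemma bounded_linear_Sfun: "bounded_linear (Sfun :: 'n::finite state \<Rightarrow> real)"
  unfolding Sfun_def by (intro bounded_linear_compose[OF bounded_linear_snd bounded_linear_snd])

lemma grads_Sfun: "grad1 Sfun z = 0" "grad2 Sfun z = 0" "dS Sfun z = 1"
proof -
  from bounded_linear_Sfun have "(Sfun has_derivative (\<lambda>(a, b, c). inner (0::real^'a) a + inner (0::real^'a) b + 1 * c)) (at z)"
    by (rule has_derivative_eq_rhs[OF bounded_linear_imp_has_derivative])
      (auto simp: Sfun_def fun_eq_iff)
  from grads_of_has_derivative[OF this] show "grad1 Sfun z = 0" "grad2 Sfun z = 0" "dS Sfun z = 1"
    by auto
qed

lemma bounded_linear_momentum_coordinate: "bounded_linear (\<lambda>z :: 'n::finite state. fst (snd z) $ i)"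
  by (intro bounded_linear_compose[OF bounded_linear_vec_nth]
      bounded_linear_compose[OF bounded_linear_fst bounded_linear_snd])

lemma grads_momentum_coordinate:
  "grad1 (\<lambda>z. fst (snd z) $ i) z = 0" "grad2 (\<lambda>z. fst (snd z) $ i) z = axis i 1"
  "dS (\<lambda>z :: 'n::finite state. fst (snd z) $ i) z = 0"
proof -
  have "((\<lambda>z :: 'n state. fst (snd z) $ i) has_derivative
      (\<lambda>(a, b, c). inner 0 a + inner (axis i 1) b + 0 * c)) (at z)"
    by (rule has_derivative_eq_rhs[OF bounded_linear_imp_has_derivative
          [OF bounded_linear_momentum_coordinate]]) (auto simp: inner_axis inner_axis' fun_eq_iff)
  from grads_of_has_derivative[OF this] show "grad1 (\<lambda>z. fst (snd z) $ i) z = 0"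
    "grad2 (\<lambda>z. fst (snd z) $ i) z = axis i 1" "dS (\<lambda>z :: 'n state. fst (snd z) $ i) z = 0"
    by simp_all
qed

lemma poisson_fourbr_Ham:
  fixes L :: "'n::finite state \<Rightarrow> real"
  assumes "grad1 (Ham L V) z = - G" "grad2 (Ham L V) z = v" "dS (Ham L V) z = - c"
    and "Ffr_H L V Ffr z = Fr"
    and "c \<noteq> 0" "inner Fr v \<noteq> 0"
  shows "poisson F (Ham L V) z + fourbr L V Ffr F (Ham L V) Sfun (Ham L V) z
     = inner (grad1 F z) v + inner (grad2 F z) (G + Fr) + dS F z * (inner Fr v / c)"
proof -
  have "Temp L V z = - c" "Kfun L V Ffr z = - inner Fr v"
    using assms by (simp_all add: Temp_def Kfun_def)
  with assms show ?thesis
    unfolding poisson_def fourbr_def Let_def grads_Sfun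
    by (simp add: field_simps inner_add_right inner_commute)
qed

section \<open>Calculus of variations\<close>

lemma uniform_perturbation_in_open:
  fixes q h :: "real \<Rightarrow> 'a::real_normed_vector"
  assumes "open Q" "compact I" "continuous_on I q" "continuous_on I h" "q ` I \<subseteq> Q"
  obtains r where "r > 0" "\<And>\<epsilon> t. \<bar>\<epsilon>\<bar> < r \<Longrightarrow> t \<in> I \<Longrightarrow> q t + \<epsilon> *\<^sub>R h t \<in> Q"
proof -
  obtain e where e: "e > 0" "(\<Union>x\<in>q ` I. ball x e) \<subseteq> Q"
    using compact_subset_open_imp_ball_epsilon_subset[OF compact_continuous_image[OF assms(3,2)]
        assms(1,5)] by metis
  obtain B where B: "B > 0" "\<And>t. t \<in> I \<Longrightarrow> norm (h t) \<le> B"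
    using compact_imp_bounded[OF compact_continuous_image[OF assms(4,2)]] bounded_pos
    by (metis image_eqI)
  have "q t + \<epsilon> *\<^sub>R h t \<in> Q" if "\<bar>\<epsilon>\<bar> < e / B" "t \<in> I" for \<epsilon> t
  proof -
    have "norm (\<epsilon> *\<^sub>R h t) \<le> \<bar>\<epsilon>\<bar> * B" using B that by (simp add: mult_left_mono)
    also have "\<dots> < e" using that B by (simp add: field_simps)
    finally have "q t + \<epsilon> *\<^sub>R h t \<in> ball (q t) e" by (simp add: dist_norm)
    then show ?thesis using e that by blast
  qed
  with e B show ?thesis by (intro that[of "e / B"]) auto
qed

lemma action_has_derivative:
  fixes L :: "'n::finite state \<Rightarrow> real" and z w :: "real \<Rightarrow> 'n state"
  assumes "open D" and L_diff: "\<And>x. x \<in> D \<Longrightarrow> L differentiable (at x)"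
    and grads_cont: "continuous_on D (grad1 L)" "continuous_on D (grad2 L)" "continuous_on D (dS L)"
    and z_cont: "continuous_on {a..b} z" and w_cont: "continuous_on {a..b} w"
    and "z ` {a..b} \<subseteq> D"
  shows "((\<lambda>\<epsilon>. integral {a..b} (\<lambda>t. L (z t + \<epsilon> *\<^sub>R w t))) has_real_derivative
    integral {a..b} (\<lambda>t. inner (grad1 L (z t)) (fst (w t)) + inner (grad2 L (z t)) (fst (snd (w t)))
      + dS L (z t) * snd (snd (w t)))) (at 0)"
proof -
  obtain r where r: "r > 0" "\<And>\<epsilon> t. \<bar>\<epsilon>\<bar> < r \<Longrightarrow> t \<in> {a..b} \<Longrightarrow> z t + \<epsilon> *\<^sub>R w t \<in> D"
    using uniform_perturbation_in_open[OF \<open>open D\<close> compact_Icc z_cont w_cont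
        \<open>z ` {a..b} \<subseteq> D\<close>] by blast
  define U where "U = ball (0::real) r"
  define L' where "L' \<epsilon> t = inner (grad1 L (z t + \<epsilon> *\<^sub>R w t)) (fst (w t))
    + inner (grad2 L (z t + \<epsilon> *\<^sub>R w t)) (fst (snd (w t))) + dS L (z t + \<epsilon> *\<^sub>R w t) * snd (snd (w t))"
    for \<epsilon> t
  have in_D: "z t + \<epsilon> *\<^sub>R w t \<in> D" if "\<epsilon> \<in> U" "t \<in> {a..b}" for \<epsilon> t
    using r that by (simp add: U_def)
  have line_cont: "continuous_on (U \<times> {a..b}) (\<lambda>(\<epsilon>, t). z t + \<epsilon> *\<^sub>R w t)"
    unfolding split_beta
    by (intro continuous_intros continuous_on_compose2[OF z_cont] continuous_on_compose2[OF w_cont])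
      auto
  have "(\<lambda>(\<epsilon>, t). z t + \<epsilon> *\<^sub>R w t) ` (U \<times> {a..b}) \<subseteq> D" using in_D by auto
  then have "continuous_on (U \<times> {a..b}) (\<lambda>(\<epsilon>, t). f (z t + \<epsilon> *\<^sub>R w t))"
    if "continuous_on D f" for f :: "_ \<Rightarrow> 'b::topological_space"
    using continuous_on_compose[OF line_cont continuous_on_subset[OF that]]
    by (simp add: o_def split_beta)
  from this[OF grads_cont(1)] this[OF grads_cont(2)] this[OF grads_cont(3)]
  have L'_cont: "continuous_on (U \<times> cbox a b) (\<lambda>(\<epsilon>, t). L' \<epsilon> t)"
    unfolding L'_def split_beta
    by (intro continuous_intros continuous_on_compose2[OF w_cont]) auto
  have L'_deriv: "((\<lambda>\<epsilon>. L (z t + \<epsilon> *\<^sub>R w t)) has_real_derivative L' \<epsilon> t) (at \<epsilon> within U)"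
    if "\<epsilon> \<in> U" "t \<in> cbox a b" for \<epsilon> t
    unfolding L'_def using in_D L_diff that by (intro has_real_derivative_along_line) simp
  have "continuous_on D L"
    by (intro continuous_at_imp_continuous_on ballI differentiable_imp_continuous_within L_diff)
  then have L_integrable: "(\<lambda>t. L (z t + \<epsilon> *\<^sub>R w t)) integrable_on cbox a b" if "\<epsilon> \<in> U" for \<epsilon>
    using that in_D
    by (auto intro!: integrable_continuous_interval continuous_on_compose2[of D L] continuous_intros
        z_cont w_cont)
  have U: "0 \<in> U" "open U" "convex U" using r by (auto simp: U_def)
  have "((\<lambda>\<epsilon>. integral (cbox a b) (\<lambda>t. L (z t + \<epsilon> *\<^sub>R w t))) has_real_derivative
      integral (cbox a b) (L' 0)) (at 0 within U)"
    by (rule leibniz_rule_field_derivative[OF L'_deriv L_integrable L'_cont U(1,3)])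
  then show ?thesis
    using at_within_open[OF U(1,2)] by (simp add: L'_def[abs_def])
qed

lemma has_integral_inner_derivative_vanishing_ends:
  fixes p h :: "real \<Rightarrow> 'a::real_inner"
  assumes "a \<le> b"
    and "\<And>t. t \<in> {a..b} \<Longrightarrow> (p has_vector_derivative p' t) (at t within {a..b})"
    and "\<And>t. t \<in> {a..b} \<Longrightarrow> (h has_vector_derivative h' t) (at t within {a..b})"
    and "h a = 0" "h b = 0"
  shows "((\<lambda>t. inner (p' t) (h t) + inner (p t) (h' t)) has_integral 0) {a..b}"
proof -
  have "((\<lambda>t. inner (p' t) (h t) + inner (p t) (h' t)) has_integral
      inner (p b) (h b) - inner (p a) (h a)) {a..b}"
  proof (rule fundamental_theorem_of_calculus[OF assms(1)])
    fix t assume "t \<in> {a..b}"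
    from bounded_bilinear.FDERIV[OF bounded_bilinear_inner,
        OF assms(2,3)[OF this, unfolded has_vector_derivative_def]]
    show "((\<lambda>t. inner (p t) (h t)) has_vector_derivative inner (p' t) (h t) + inner (p t) (h' t))
        (at t within {a..b})"
      unfolding has_vector_derivative_def
      by (rule has_derivative_eq_rhs) (auto simp: fun_eq_iff algebra_simps)
  qed
  with assms(4,5) show ?thesis by simp
qed

lemma weighted_square_integral_zero_imp_zero:
  fixes g :: "real \<Rightarrow> 'a::real_inner"
  assumes "a < b" "continuous_on {a..b} g"
    and "((\<lambda>t. ((t - a) * (b - t)) * inner (g t) (g t)) has_integral 0) {a..b}"
    and "t \<in> {a..b}"
  shows "g t = 0"
proof -
  have weighted_zero: "((t - a) * (b - t)) * inner (g t) (g t) = 0" if "t \<in> {a..b}" for t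
  proof (rule has_integral_0_cbox_imp_0[of a b "\<lambda>t. ((t - a) * (b - t)) * inner (g t) (g t)"])
    have "continuous_on {a..b} (\<lambda>t. ((t - a) * (b - t)) * inner (g t) (g t))"
      using assms(2) by (intro continuous_intros)
    then show "continuous_on (cbox a b) (\<lambda>t. ((t - a) * (b - t)) * inner (g t) (g t))"
      by simp
    show "0 \<le> ((x - a) * (b - x)) * inner (g x) (g x)" if "x \<in> box a b" for x
      using that by (simp add: box_real)
  qed (use assms that in \<open>simp_all add: box_real\<close>)
  have "g t = 0" if "t \<in> {a<..<b}" for t
    using that weighted_zero[of t] by auto
  then show ?thesis
    using continuous_constant_on_closure[of "{a<..<b}" g 0 t] assms by auto
qed

section \<open>Simple thermodynamic systems\<close>

locale thermo_curve =
  fixes Q :: "(real^'n::finite) set" and L :: "'n state \<Rightarrow> real" and Ffr :: "'n state \<Rightarrow> real^'n"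
    and Tf :: real and q :: "real \<Rightarrow> real^'n" and S :: "real \<Rightarrow> real"
  assumes open_Q: "open Q"
    and L_smooth: "smooth_on (Q \<times> UNIV \<times> UNIV) L"
    and Ffr_smooth: "smooth_on (Q \<times> UNIV \<times> UNIV) Ffr"
    and Tf_pos: "0 < Tf"
    and q_smooth: "smooth_on {0..Tf} q"
    and S_smooth: "smooth_on {0..Tf} S"
    and q_in_Q: "\<And>t. t \<in> {0..Tf} \<Longrightarrow> q t \<in> Q"
begin

definition qdot :: "real \<Rightarrow> real^'n" where
  "qdot t = vector_derivative q (at t within {0..Tf})"

definition Sdot :: "real \<Rightarrow> real" where
  "Sdot t = vector_derivative S (at t within {0..Tf})"

definition tangent :: "real \<Rightarrow> 'n state" where
  "tangent t = (q t, qdot t, S t)"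

definition momentum :: "real \<Rightarrow> real^'n" where
  "momentum t = grad2 L (tangent t)"

definition momentum_dot :: "real \<Rightarrow> real^'n" where
  "momentum_dot t = vector_derivative momentum (at t within {0..Tf})"

definition equations_of_motion :: bool where
  "equations_of_motion \<longleftrightarrow> (\<forall>t\<in>{0..Tf}.
     momentum_dot t = grad1 L (tangent t) + Ffr (tangent t) \<and>
     dS L (tangent t) * Sdot t = inner (Ffr (tangent t)) (qdot t))"

definition admissible :: "(real \<Rightarrow> real^'n) \<Rightarrow> (real \<Rightarrow> real) \<Rightarrow> bool" where
  "admissible \<delta>q \<delta>S \<longleftrightarrow> smooth_on {0..Tf} \<delta>q \<and> smooth_on {0..Tf} \<delta>S \<and> \<delta>q 0 = 0 \<and> \<delta>q Tf = 0 \<and>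
     (\<forall>t\<in>{0..Tf}. dS L (tangent t) * \<delta>S t = inner (Ffr (tangent t)) (\<delta>q t))"

definition varied_action :: "(real \<Rightarrow> real^'n) \<Rightarrow> (real \<Rightarrow> real) \<Rightarrow> real \<Rightarrow> real" where
  "varied_action \<delta>q \<delta>S \<epsilon> = integral {0..Tf} (\<lambda>t. L (q t + \<epsilon> *\<^sub>R \<delta>q t,
     qdot t + \<epsilon> *\<^sub>R vector_derivative \<delta>q (at t within {0..Tf}), S t + \<epsilon> * \<delta>S t))"

lemma var_solution_iff_stationary:
  "var_solution L Ffr Tf q S \<longleftrightarrow>
    (\<forall>\<delta>q \<delta>S. admissible \<delta>q \<delta>S \<longrightarrow> (varied_action \<delta>q \<delta>S has_real_derivative 0) (at 0)) \<and>
    (\<forall>t\<in>{0..Tf}. dS L (tangent t) * Sdot t = inner (Ffr (tangent t)) (qdot t))"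
  unfolding var_solution_def Let_def admissible_def varied_action_def[abs_def] tangent_def
    qdot_def Sdot_def
  by simp

lemma open_domain: "open (Q \<times> UNIV \<times> UNIV)"
  using open_Q by (intro open_Times) auto

lemma basis_approachable_interval: "basis_approachable {0..Tf}"
  using Tf_pos by (rule basis_approachable_atLeastAtMost)

lemma tangent_in_domain: "t \<in> {0..Tf} \<Longrightarrow> tangent t \<in> Q \<times> UNIV \<times> UNIV"
  by (simp add: tangent_def q_in_Q)

lemma smooth_on_qdot: "smooth_on {0..Tf} qdot"
  unfolding qdot_def[abs_def] using Tf_pos q_smooth by (rule smooth_on_vector_derivative)

lemma smooth_on_tangent: "smooth_on {0..Tf} tangent"
  unfolding tangent_def[abs_def]
  by (intro smooth_on_Pair basis_approachable_interval q_smooth smooth_on_qdot S_smooth)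

lemma smooth_on_comp_tangent:
  "smooth_on (Q \<times> UNIV \<times> UNIV) f \<Longrightarrow> smooth_on {0..Tf} (\<lambda>t. f (tangent t))"
  by (rule smooth_on_compose[OF open_domain basis_approachable_interval _ smooth_on_tangent
        tangent_in_domain])

lemma smooth_on_momentum: "smooth_on {0..Tf} momentum"
  unfolding momentum_def[abs_def]
  by (intro smooth_on_comp_tangent smooth_on_grad2 open_domain L_smooth)

lemma smooth_on_momentum_dot: "smooth_on {0..Tf} momentum_dot"
  unfolding momentum_dot_def[abs_def] using Tf_pos smooth_on_momentum
  by (rule smooth_on_vector_derivative)

lemma L_differentiable: "z \<in> Q \<times> UNIV \<times> UNIV \<Longrightarrow> L differentiable (at z)"
  by (rule smooth_on_open_imp_differentiable[OF open_domain L_smooth])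

lemma varied_action_has_derivative:
  assumes "smooth_on {0..Tf} \<delta>q" "smooth_on {0..Tf} \<delta>S"
  shows "(varied_action \<delta>q \<delta>S has_real_derivative integral {0..Tf} (\<lambda>t.
    inner (grad1 L (tangent t)) (\<delta>q t) + inner (momentum t) (vector_derivative \<delta>q (at t within {0..Tf}))
    + dS L (tangent t) * \<delta>S t)) (at 0)"
proof -
  let ?w = "\<lambda>t. (\<delta>q t, vector_derivative \<delta>q (at t within {0..Tf}), \<delta>S t)"
  have varied_action_eq:
    "varied_action \<delta>q \<delta>S = (\<lambda>\<epsilon>. integral {0..Tf} (\<lambda>t. L (tangent t + \<epsilon> *\<^sub>R ?w t)))"
    by (simp add: fun_eq_iff varied_action_def tangent_def)
  have w_cont: "continuous_on {0..Tf} ?w"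
    using Tf_pos assms
    by (intro continuous_on_Pair smooth_on_imp_continuous_on smooth_on_vector_derivative)
  have grads_cont: "continuous_on (Q \<times> UNIV \<times> UNIV) (grad1 L)"
    "continuous_on (Q \<times> UNIV \<times> UNIV) (grad2 L)" "continuous_on (Q \<times> UNIV \<times> UNIV) (dS L)"
    using smooth_on_grad1 smooth_on_grad2 smooth_on_dS open_domain L_smooth
    by (blast intro: smooth_on_imp_continuous_on)+
  have "tangent ` {0..Tf} \<subseteq> Q \<times> UNIV \<times> UNIV" using tangent_in_domain by blast
  from action_has_derivative[OF open_domain L_differentiable grads_cont
      smooth_on_imp_continuous_on[OF smooth_on_tangent] w_cont this]
  show ?thesis
    unfolding varied_action_eq momentum_def by simp
qed

lemma admissible_varied_action_has_derivative:
  assumes "admissible \<delta>q \<delta>S"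
  shows "(varied_action \<delta>q \<delta>S has_real_derivative integral {0..Tf} (\<lambda>t.
    inner (grad1 L (tangent t) + Ffr (tangent t) - momentum_dot t) (\<delta>q t))) (at 0)"
proof -
  let ?\<delta>q' = "\<lambda>t. vector_derivative \<delta>q (at t within {0..Tf})"
  let ?g = "\<lambda>t. grad1 L (tangent t) + Ffr (tangent t) - momentum_dot t"
  have \<delta>q: "smooth_on {0..Tf} \<delta>q" and \<delta>S: "smooth_on {0..Tf} \<delta>S"
    and ends: "\<delta>q 0 = 0" "\<delta>q Tf = 0"
    and constraint: "\<And>t. t \<in> {0..Tf} \<Longrightarrow> dS L (tangent t) * \<delta>S t = inner (Ffr (tangent t)) (\<delta>q t)"
    using assms by (auto simp: admissible_def)
  have "continuous_on {0..Tf} (\<lambda>t. inner (?g t) (\<delta>q t))"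
    by (intro smooth_on_imp_continuous_on smooth_on_inner smooth_on_diff smooth_on_add
        basis_approachable_interval smooth_on_comp_tangent smooth_on_grad1 open_domain L_smooth
        Ffr_smooth smooth_on_momentum_dot \<delta>q)
  then have "((\<lambda>t. inner (?g t) (\<delta>q t)) has_integral integral {0..Tf} (\<lambda>t. inner (?g t) (\<delta>q t)))
      {0..Tf}"
    by (intro integrable_integral integrable_continuous_interval)
  moreover have "((\<lambda>t. inner (momentum_dot t) (\<delta>q t) + inner (momentum t) (?\<delta>q' t)) has_integral 0)
      {0..Tf}"
    using Tf_pos ends smooth_on_has_vector_derivative[OF smooth_on_momentum]
      smooth_on_has_vector_derivative[OF \<delta>q]
    by (intro has_integral_inner_derivative_vanishing_ends) (auto simp: momentum_dot_def)
  ultimately have "((\<lambda>t. inner (?g t) (\<delta>q t) + (inner (momentum_dot t) (\<delta>q t)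
      + inner (momentum t) (?\<delta>q' t))) has_integral integral {0..Tf} (\<lambda>t. inner (?g t) (\<delta>q t)) + 0)
      {0..Tf}"
    by (rule has_integral_add)
  note sum = this[unfolded add_0_right]
  have "((\<lambda>t. inner (grad1 L (tangent t)) (\<delta>q t) + inner (momentum t) (?\<delta>q' t)
      + dS L (tangent t) * \<delta>S t) has_integral integral {0..Tf} (\<lambda>t. inner (?g t) (\<delta>q t))) {0..Tf}"
    by (rule has_integral_eq[rotated, OF sum])
      (simp add: constraint inner_diff_left inner_add_left)
  with varied_action_has_derivative[OF \<delta>q \<delta>S] show ?thesis
    by (simp add: integral_unique)
qed

lemma stationary_imp_momentum_balance:
  assumes dS_nonzero: "\<And>t. t \<in> {0..Tf} \<Longrightarrow> dS L (tangent t) \<noteq> 0"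
    and stationary: "\<And>\<delta>q \<delta>S. admissible \<delta>q \<delta>S \<Longrightarrow> (varied_action \<delta>q \<delta>S has_real_derivative 0) (at 0)"
    and "t \<in> {0..Tf}"
  shows "momentum_dot t = grad1 L (tangent t) + Ffr (tangent t)"
proof -
  define g where "g t = grad1 L (tangent t) + Ffr (tangent t) - momentum_dot t" for t
  define \<delta>q where "\<delta>q t = (t * (Tf - t)) *\<^sub>R g t" for t
  define \<delta>S where "\<delta>S t = inner (Ffr (tangent t)) (\<delta>q t) * inverse (dS L (tangent t))" for t
    \<comment> \<open>the variational constraint solved for \<open>\<delta>S\<close>: this is where \<open>T \<noteq> 0\<close> is needed\<close>
  have g: "smooth_on {0..Tf} g"
    unfolding g_def[abs_def]
    by (intro smooth_on_diff smooth_on_add basis_approachable_interval smooth_on_comp_tangent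
        smooth_on_grad1 open_domain L_smooth Ffr_smooth smooth_on_momentum_dot)
  have \<delta>q: "smooth_on {0..Tf} \<delta>q"
    unfolding \<delta>q_def[abs_def]
    by (intro smooth_on_scaleR smooth_on_mult smooth_on_diff smooth_on_const
        smooth_on_bounded_linear bounded_linear_ident basis_approachable_interval g)
  have "smooth_on {0..Tf} \<delta>S"
    unfolding \<delta>S_def[abs_def]
    by (intro smooth_on_mult smooth_on_inner smooth_on_inverse basis_approachable_interval
        smooth_on_comp_tangent Ffr_smooth \<delta>q smooth_on_dS open_domain L_smooth dS_nonzero)
  with \<delta>q dS_nonzero have "admissible \<delta>q \<delta>S"
    by (simp add: admissible_def \<delta>q_def \<delta>S_def)
  from DERIV_unique[OF admissible_varied_action_has_derivative[OF this] stationary[OF this]]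
  have "integral {0..Tf} (\<lambda>t. ((t - 0) * (Tf - t)) * inner (g t) (g t)) = 0"
    by (simp add: g_def \<delta>q_def)
  moreover have "continuous_on {0..Tf} (\<lambda>t. ((t - 0) * (Tf - t)) * inner (g t) (g t))"
    using smooth_on_imp_continuous_on[OF g] by (intro continuous_intros)
  ultimately have "((\<lambda>t. ((t - 0) * (Tf - t)) * inner (g t) (g t)) has_integral 0) {0..Tf}"
    using integrable_continuous_interval has_integral_integrable_integral by metis
  from weighted_square_integral_zero_imp_zero[OF Tf_pos smooth_on_imp_continuous_on[OF g] this
      \<open>t \<in> {0..Tf}\<close>]
  show ?thesis by (simp add: g_def)
qed

theorem var_solution_iff_equations_of_motion:
  assumes "\<And>t. t \<in> {0..Tf} \<Longrightarrow> dS L (tangent t) \<noteq> 0"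
  shows "var_solution L Ffr Tf q S \<longleftrightarrow> equations_of_motion"
proof -
  have "(\<forall>\<delta>q \<delta>S. admissible \<delta>q \<delta>S \<longrightarrow> (varied_action \<delta>q \<delta>S has_real_derivative 0) (at 0)) \<longleftrightarrow>
    (\<forall>t\<in>{0..Tf}. momentum_dot t = grad1 L (tangent t) + Ffr (tangent t))"
  proof safe
    fix \<delta>q \<delta>S assume "\<forall>t\<in>{0..Tf}. momentum_dot t = grad1 L (tangent t) + Ffr (tangent t)"
      and "admissible \<delta>q \<delta>S"
    then have "integral {0..Tf} (\<lambda>t. inner (grad1 L (tangent t) + Ffr (tangent t) - momentum_dot t)
        (\<delta>q t)) = integral {0..Tf} (\<lambda>t. 0)"
      by (intro integral_cong) simp
    with admissible_varied_action_has_derivative[OF \<open>admissible \<delta>q \<delta>S\<close>]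
    show "(varied_action \<delta>q \<delta>S has_real_derivative 0) (at 0)"
      by simp
  qed (use stationary_imp_momentum_balance assms in blast)
  then show ?thesis
    unfolding var_solution_iff_stationary equations_of_motion_def by blast
qed

end

locale legendre_thermo_curve = thermo_curve Q L Ffr Tf q S
  for Q :: "(real^'n::finite) set" and L Ffr Tf q S +
  fixes V :: "'n state \<Rightarrow> real^'n"
  assumes V_differentiable: "\<And>z. z \<in> Q \<times> UNIV \<times> UNIV \<Longrightarrow> V differentiable (at z)"
    and V_left: "\<And>x v s. x \<in> Q \<Longrightarrow> V (x, grad2 L (x, v, s), s) = v"
    and V_right: "\<And>x p s. x \<in> Q \<Longrightarrow> grad2 L (x, V (x, p, s), s) = p"
begin

lemma V_momentum: "t \<in> {0..Tf} \<Longrightarrow> V (q t, momentum t, S t) = qdot t"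
  by (simp add: momentum_def tangent_def V_left q_in_Q)

lemma grads_Ham_momentum:
  assumes "t \<in> {0..Tf}"
  shows "grad1 (Ham L V) (q t, momentum t, S t) = - grad1 L (tangent t)"
    and "grad2 (Ham L V) (q t, momentum t, S t) = qdot t"
    and "dS (Ham L V) (q t, momentum t, S t) = - dS L (tangent t)"
proof -
  have "V differentiable (at (q t, momentum t, S t))"
    using assms q_in_Q by (intro V_differentiable) simp
  moreover have "L differentiable (at (q t, V (q t, momentum t, S t), S t))"
    using assms tangent_in_domain by (simp add: V_momentum L_differentiable tangent_def)
  moreover have "grad2 L (q t, V (q t, momentum t, S t), S t) = momentum t"
    using assms q_in_Q by (simp add: V_right)
  ultimately show "grad1 (Ham L V) (q t, momentum t, S t) = - grad1 L (tangent t)"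
    "grad2 (Ham L V) (q t, momentum t, S t) = qdot t"
    "dS (Ham L V) (q t, momentum t, S t) = - dS L (tangent t)"
    using grads_Ham[of V "q t" "momentum t" "S t" L] assms by (simp_all add: V_momentum tangent_def)
qed

lemma Ffr_H_momentum: "t \<in> {0..Tf} \<Longrightarrow> Ffr_H L V Ffr (q t, momentum t, S t) = Ffr (tangent t)"
  by (simp add: Ffr_H_def grads_Ham_momentum tangent_def)

lemma Temp_momentum: "t \<in> {0..Tf} \<Longrightarrow> Temp L V (q t, momentum t, S t) = - dS L (tangent t)"
  by (simp add: Temp_def grads_Ham_momentum)

lemma Kfun_momentum:
  "t \<in> {0..Tf} \<Longrightarrow> Kfun L V Ffr (q t, momentum t, S t) = - inner (Ffr (tangent t)) (qdot t)"
  by (simp add: Kfun_def grads_Ham_momentum Ffr_H_momentum)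

lemma metriplectic_rhs_momentum:
  assumes "t \<in> {0..Tf}" "dS L (tangent t) \<noteq> 0" "inner (Ffr (tangent t)) (qdot t) \<noteq> 0"
  defines "z \<equiv> (q t, momentum t, S t)"
  shows "poisson F (Ham L V) z + fourbr L V Ffr F (Ham L V) Sfun (Ham L V) z =
    inner (grad1 F z) (qdot t) + inner (grad2 F z) (grad1 L (tangent t) + Ffr (tangent t))
    + dS F z * (inner (Ffr (tangent t)) (qdot t) / dS L (tangent t))"
  unfolding z_def using assms
  by (intro poisson_fourbr_Ham grads_Ham_momentum Ffr_H_momentum)

lemma metriplectic_bounded_linear_evolution:
  assumes "metriplectic (Q \<times> UNIV \<times> UNIV) L V Ffr Tf q momentum S" "bounded_linear F"
    and "t \<in> {0..Tf}" "dS L (tangent t) \<noteq> 0" "inner (Ffr (tangent t)) (qdot t) \<noteq> 0"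
  shows "((\<lambda>t. F (q t, momentum t, S t)) has_real_derivative
    inner (grad1 F (q t, momentum t, S t)) (qdot t)
    + inner (grad2 F (q t, momentum t, S t)) (grad1 L (tangent t) + Ffr (tangent t))
    + dS F (q t, momentum t, S t) * (inner (Ffr (tangent t)) (qdot t) / dS L (tangent t)))
    (at t within {0..Tf})"
proof -
  have "smooth_on (Q \<times> UNIV \<times> UNIV) F"
    by (rule smooth_on_bounded_linear[OF basis_approachable_open[OF open_domain] assms(2)])
  with assms(1,3) have "((\<lambda>t. F (q t, momentum t, S t)) has_real_derivative
      poisson F (Ham L V) (q t, momentum t, S t)
      + fourbr L V Ffr F (Ham L V) Sfun (Ham L V) (q t, momentum t, S t)) (at t within {0..Tf})"
    unfolding metriplectic_def by blast
  then show ?thesis by (simp only: metriplectic_rhs_momentum[OF assms(3-5)])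
qed

lemma metriplectic_imp_equations_of_motion:
  assumes "metriplectic (Q \<times> UNIV \<times> UNIV) L V Ffr Tf q momentum S"
    and dS_nonzero: "\<And>t. t \<in> {0..Tf} \<Longrightarrow> dS L (tangent t) \<noteq> 0"
    and power_nonzero: "\<And>t. t \<in> {0..Tf} \<Longrightarrow> inner (Ffr (tangent t)) (qdot t) \<noteq> 0"
  shows equations_of_motion
  unfolding equations_of_motion_def
proof (intro ballI conjI)
  fix t assume t: "t \<in> {0..Tf}"
  note evolution = metriplectic_bounded_linear_evolution[OF assms(1) _ t dS_nonzero[OF t]
      power_nonzero[OF t]]
  have "((\<lambda>t. momentum t $ i) has_real_derivative (grad1 L (tangent t) + Ffr (tangent t)) $ i)
      (at t within {0..Tf})" for i
    using evolution[OF bounded_linear_momentum_coordinate[of i]]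
    by (simp add: grads_momentum_coordinate inner_axis')
  then have "(momentum has_vector_derivative grad1 L (tangent t) + Ffr (tangent t))
      (at t within {0..Tf})"
    by (rule vec_has_vector_derivativeI)
  then show "momentum_dot t = grad1 L (tangent t) + Ffr (tangent t)"
    unfolding momentum_dot_def using vector_derivative_within_closed_interval[OF Tf_pos t] by blast
  have "(S has_real_derivative inner (Ffr (tangent t)) (qdot t) / dS L (tangent t))
      (at t within {0..Tf})"
    using evolution[OF bounded_linear_Sfun] by (simp add: grads_Sfun Sfun_def)
  then have "Sdot t = inner (Ffr (tangent t)) (qdot t) / dS L (tangent t)"
    unfolding Sdot_def has_real_derivative_iff_has_vector_derivative
    using vector_derivative_within_closed_interval[OF Tf_pos t] by blast
  with dS_nonzero[OF t] show "dS L (tangent t) * Sdot t = inner (Ffr (tangent t)) (qdot t)"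
    by simp
qed

lemma equations_of_motion_imp_metriplectic:
  assumes equations_of_motion
    and dS_nonzero: "\<And>t. t \<in> {0..Tf} \<Longrightarrow> dS L (tangent t) \<noteq> 0"
    and power_nonzero: "\<And>t. t \<in> {0..Tf} \<Longrightarrow> inner (Ffr (tangent t)) (qdot t) \<noteq> 0"
  shows "metriplectic (Q \<times> UNIV \<times> UNIV) L V Ffr Tf q momentum S"
  unfolding metriplectic_def
proof (intro allI impI ballI)
  fix F :: "'n state \<Rightarrow> real" and t assume F: "smooth_on (Q \<times> UNIV \<times> UNIV) F"
    and t: "t \<in> {0..Tf}"
  have "F differentiable (at (q t, momentum t, S t))"
    using t q_in_Q by (intro smooth_on_open_imp_differentiable[OF open_domain F]) simp
  moreover have "((\<lambda>t. (q t, momentum t, S t)) has_vector_derivative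
      (qdot t, momentum_dot t, Sdot t)) (at t within {0..Tf})"
    using smooth_on_has_vector_derivative[OF q_smooth t]
      smooth_on_has_vector_derivative[OF smooth_on_momentum t]
      smooth_on_has_vector_derivative[OF S_smooth t]
    by (intro has_vector_derivative_Pair) (simp_all add: qdot_def momentum_dot_def Sdot_def)
  ultimately have "((\<lambda>t. F (q t, momentum t, S t)) has_real_derivative
      inner (grad1 F (q t, momentum t, S t)) (qdot t) + inner (grad2 F (q t, momentum t, S t))
      (momentum_dot t) + dS F (q t, momentum t, S t) * Sdot t) (at t within {0..Tf})"
    using has_real_derivative_comp_state_curve[where \<gamma>="\<lambda>t. (q t, momentum t, S t)"
        and \<gamma>'="(qdot t, momentum_dot t, Sdot t)"]
    by simp
  moreover have "momentum_dot t = grad1 L (tangent t) + Ffr (tangent t)"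
    "Sdot t = inner (Ffr (tangent t)) (qdot t) / dS L (tangent t)"
    using assms(1) t dS_nonzero[OF t] by (auto simp: equations_of_motion_def field_simps)
  ultimately show "((\<lambda>t. F (q t, momentum t, S t)) has_real_derivative
      poisson F (Ham L V) (q t, momentum t, S t)
      + fourbr L V Ffr F (Ham L V) Sfun (Ham L V) (q t, momentum t, S t)) (at t within {0..Tf})"
    using t by (simp add: metriplectic_rhs_momentum dS_nonzero power_nonzero)
qed

theorem metriplectic_iff_equations_of_motion:
  assumes "\<And>t. t \<in> {0..Tf} \<Longrightarrow> dS L (tangent t) \<noteq> 0"
    and "\<And>t. t \<in> {0..Tf} \<Longrightarrow> inner (Ffr (tangent t)) (qdot t) \<noteq> 0"
  shows "metriplectic (Q \<times> UNIV \<times> UNIV) L V Ffr Tf q momentum S \<longleftrightarrow> equations_of_motion"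
  using metriplectic_imp_equations_of_motion equations_of_motion_imp_metriplectic assms by blast

end

theorem mainTheorem1:
  fixes Q :: "(real^'n::finite) set"
    and L :: "'n state \<Rightarrow> real"
    and Ffr :: "'n state \<Rightarrow> real^'n"
    and V :: "'n state \<Rightarrow> real^'n"
    and Tf :: real
    and q :: "real \<Rightarrow> real^'n"
    and S :: "real \<Rightarrow> real"
  assumes Q_open: "open Q"
    and L_smooth: "smooth_on (Q \<times> UNIV \<times> UNIV) L"
    and Ffr_smooth: "smooth_on (Q \<times> UNIV \<times> UNIV) Ffr"
    and V_smooth: "smooth_on (Q \<times> UNIV \<times> UNIV) V"
    and V_left: "\<And>x v s. x \<in> Q \<Longrightarrow> V (x, grad2 L (x, v, s), s) = v"
    and V_right: "\<And>x p s. x \<in> Q \<Longrightarrow> grad2 L (x, V (x, p, s), s) = p"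
    and Tf_pos: "0 < Tf"
    and q_smooth: "smooth_on {0..Tf} q"
    and S_smooth: "smooth_on {0..Tf} S"
    and q_in_Q: "\<And>t. t \<in> {0..Tf} \<Longrightarrow> q t \<in> Q"
    and T_nonzero: "\<And>t. t \<in> {0..Tf} \<Longrightarrow>
          Temp L V (q t, grad2 L (q t, vector_derivative q (at t within {0..Tf}), S t), S t) \<noteq> 0"
    and K_nonzero: "\<And>t. t \<in> {0..Tf} \<Longrightarrow>
          Kfun L V Ffr (q t, grad2 L (q t, vector_derivative q (at t within {0..Tf}), S t), S t) \<noteq> 0"
  shows "var_solution L Ffr Tf q S \<longleftrightarrow>
         metriplectic (Q \<times> UNIV \<times> UNIV) L V Ffr Tf q
           (\<lambda>t. grad2 L (q t, vector_derivative q (at t within {0..Tf}), S t)) S"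
proof -
  have "open (Q \<times> (UNIV :: (real^'n) set) \<times> (UNIV :: real set))"
    using Q_open by (intro open_Times open_UNIV)
  then have V_differentiable: "V differentiable (at z)" if "z \<in> Q \<times> UNIV \<times> UNIV" for z
    using V_smooth that by (rule smooth_on_open_imp_differentiable)
  interpret legendre_thermo_curve Q L Ffr Tf q S V
    using V_differentiable V_left V_right
    by unfold_locales (use assms in auto)
  have momentum: "momentum = (\<lambda>t. grad2 L (q t, vector_derivative q (at t within {0..Tf}), S t))"
    by (simp add: fun_eq_iff momentum_def tangent_def qdot_def)
  have "dS L (tangent t) \<noteq> 0" "inner (Ffr (tangent t)) (qdot t) \<noteq> 0" if "t \<in> {0..Tf}" for t
    using T_nonzero[OF that] K_nonzero[OF that] Temp_momentum[OF that] Kfun_momentum[OF that]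
    by (simp_all add: momentum)
  then show ?thesis
    using var_solution_iff_equations_of_motion metriplectic_iff_equations_of_motion momentum
    by simp
qed

end
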